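(* Let $\mathbf{x}_k\in\mathbb{R}^d$ and $\epsilon>0$, suppose the sampled estimates $\mathbf{B}_k,\mathbf{T}_k$ at $\mathbf{x}_k$ (together with $\mathbf{g}_k$) satisfy the sampling condition with accuracy $\epsilon$ and constants $\kappa_g,\kappa_b,\kappa_t>0$, and set $\epsilon_2:=\epsilon^{2/3}$. Then for all $\mathbf{s}\in\mathbb{R}^d$, $$\|\nabla^2 f(\mathbf{x}_k+\mathbf{s})-\nabla^2_{\mathbf{s}}\phi_k(\mathbf{s})\|\le\left(\frac{L_t}{2}+\frac{\kappa_t}{2}\right)\|\mathbf{s}\|^2+\left(\kappa_b+\frac{\kappa_t}{2}\right)\epsilon_2,$$ where $\nabla^2_{\mathbf{s}}\phi_k(\mathbf{s})=\mathbf{B}_k+\mathbf{T}_k[\mathbf{s}]$ and the norm is the spectral norm.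
   Context: $f(\mathbf{x})=\frac1n\sum_{i=1}^n f_i(\mathbf{x})$, each $f_i\in C^3(\mathbb{R}^d,\mathbb{R})$ with $f_i,\nabla f_i,\nabla^2 f_i,\nabla^3 f_i$ Lipschitz with constants $L_f,L_g,L_b,L_t$ (norm on third-order tensors: $\|A\|_{[3]}=\max_{\|\mathbf{h}_1\|=\|\mathbf{h}_2\|=\|\mathbf{h}_3\|=1}|A[\mathbf{h}_1,\mathbf{h}_2,\mathbf{h}_3]|$). For a third-order tensor $T$: $T[\mathbf{s}]$ is the matrix $(\sum_iT_{ijk}s_i)_{jk}$, $T[\mathbf{s}]^2=(\sum_{j,k}T_{ijk}s_js_k)_i$, $T[\mathbf{s}]^3=\sum_{i,j,k}T_{ijk}s_is_js_k$. Sampled estimates: $\mathbf{g}_k=\frac{1}{|\mathcal{S}^g|}\sum_{i\in\mathcal{S}^g}\nabla f_i(\mathbf{x}_k)$, $\mathbf{B}_k=\frac{1}{|\mathcal{S}^b|}\sum_{i\in\mathcal{S}^b}\nabla^2 f_i(\mathbf{x}_k)$, $\mathbf{T}_k=\frac{1}{|\mathcal{S}^t|}\sum_{i\in\mathcal{S}^t}\nabla^3 f_i(\mathbf{x}_k)$. $\phi_k(\mathbf{s})=f(\mathbf{x}_k)+\mathbf{g}_k^\top\mathbf{s}+\frac12\mathbf{s}^\top\mathbf{B}_k\mathbf{s}+\frac16\mathbf{T}_k[\mathbf{s}]^3$. Sampling condition (accuracy $\epsilon$): $\|\mathbf{g}_k-\nabla f(\mathbf{x}_k)\|\le\kappa_g\epsilon$;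 $\|(\mathbf{B}_k-\nabla^2 f(\mathbf{x}_k))\mathbf{s}\|\le\kappa_b\epsilon^{2/3}\|\mathbf{s}\|$ and $\|\mathbf{T}_k[\mathbf{s}]^2-\nabla^3 f(\mathbf{x}_k)[\mathbf{s}]^2\|\le\kappa_t\epsilon^{1/3}\|\mathbf{s}\|^2$ for all $\mathbf{s}\in\mathbb{R}^d$. *)

theory Defs
  imports "HOL-Analysis.Analysis"
begin

text \<open>Vectors in R^d are \<open>real^'d\<close>, matrices \<open>real^'d^'d\<close>, third-order tensors
  \<open>real^'d^'d^'d\<close> with entry \<open>T$i$j$k\<close> = T_ijk.\<close>

definition spec_norm :: "real^'d^'d \<Rightarrow> real" where
  "spec_norm A = onorm (\<lambda>v. A *v v)"

definition tensor_app3 :: "real^'d^'d^'d \<Rightarrow> real^'d \<Rightarrow> real^'d \<Rightarrow> real^'d \<Rightarrow> real" where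
  "tensor_app3 T h1 h2 h3 = (\<Sum>i\<in>UNIV. \<Sum>j\<in>UNIV. \<Sum>k\<in>UNIV. T$i$j$k * h1$i * h2$j * h3$k)"

definition tensor_norm :: "real^'d^'d^'d \<Rightarrow> real" where
  "tensor_norm T = Sup {\<bar>tensor_app3 T h1 h2 h3\<bar> | h1 h2 h3.
                          norm h1 = 1 \<and> norm h2 = 1 \<and> norm h3 = 1}"

definition tensor_mat :: "real^'d^'d^'d \<Rightarrow> real^'d \<Rightarrow> real^'d^'d" where
  "tensor_mat T s = (\<chi> j k. \<Sum>i\<in>UNIV. T$i$j$k * s$i)"

definition tensor_vec :: "real^'d^'d^'d \<Rightarrow> real^'d \<Rightarrow> real^'d" where
  "tensor_vec T s = (\<chi> i. \<Sum>j\<in>UNIV. \<Sum>k\<in>UNIV. T$i$j$k * s$j * s$k)"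

definition avg :: "nat set \<Rightarrow> (nat \<Rightarrow> 'a::real_vector) \<Rightarrow> 'a" where
  "avg S F = (1 / real (card S)) *\<^sub>R (\<Sum>i\<in>S. F i)"

end

theory Submission
  imports Defs
begin

text \<open>
  The error \<open>\<nabla>\<^sup>2f(x + s) - B - T[s]\<close> is the sum of three matrices: the average of
  the Taylor remainders \<open>H\<^sub>i(x + s) - H\<^sub>i(x) - T\<^sub>i(x)[s]\<close>, each of spectral norm at
  most \<open>L\<^sub>t |s|\<^sup>2 / 2\<close> since \<open>T\<^sub>i\<close> is \<open>L\<^sub>t\<close>-Lipschitz; the Hessian sampling error,
  of norm at most \<open>\<kappa>\<^sub>b \<epsilon>^(2/3)\<close>; and \<open>D[s]\<close> for the tensor sampling error \<open>D\<close>.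
  The sampling condition only controls the quadratic form \<open>u \<bullet> D[s] u = s \<bullet> D[u]\<^sup>2\<close>,
  which bounds the spectral norm because \<open>D[s]\<close> is symmetric: the \<open>T\<^sub>i\<close> are derivatives
  of the Hessians \<open>H\<^sub>i\<close>, which are symmetric by Schwarz's theorem (proved here from the
  Lipschitz Hessian by a second-difference estimate). Hence \<open>|D[s]| \<le> \<kappa>\<^sub>t \<epsilon>^(1/3) |s|\<close>,
  and \<open>\<epsilon>^(1/3) |s| \<le> (\<epsilon>^(2/3) + |s|\<^sup>2) / 2\<close> gives the stated form.
\<close>

lemma tensor_mat_diff: "tensor_mat (A - B) s = tensor_mat A s - tensor_mat B s"
  by (simp add: tensor_mat_def vec_eq_iff sum_subtractf left_diff_distrib)

lemma tensor_mat_scaleR_right: "tensor_mat A (c *\<^sub>R s) = c *\<^sub>R tensor_mat A s"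
  by (simp add: tensor_mat_def vec_eq_iff sum_distrib_left algebra_simps)

lemma tensor_mat_avg: "tensor_mat (avg S F) s = avg S (\<lambda>l. tensor_mat (F l) s)"
  by (simp add: avg_def tensor_mat_def vec_eq_iff sum_distrib_left sum_distrib_right
      sum.swap[of _ UNIV S] mult.assoc)

lemma tensor_vec_diff: "tensor_vec (A - B) s = tensor_vec A s - tensor_vec B s"
  by (simp add: tensor_vec_def vec_eq_iff sum_subtractf left_diff_distrib)

lemma tensor_mat_axis: "tensor_mat T (axis i 1) $ j $ k = T $ i $ j $ k"
  by (simp add: tensor_mat_def axis_def if_distrib cong: if_cong)

lemma avg_component: "avg S F $ i = avg S (\<lambda>l. F l $ i)"
  by (simp add: avg_def)

lemma avg_cong: "(\<And>l. l \<in> S \<Longrightarrow> F l = G l) \<Longrightarrow> avg S F = avg S G"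
  by (simp add: avg_def)

lemma avg_partial_symmetric:
  assumes "\<And>l. l \<in> S \<Longrightarrow> T l $ a $ b $ c = T l $ a $ c $ b"
  shows "avg S T $ a $ b $ c = avg S T $ a $ c $ b"
  using assms by (simp add: avg_component cong: avg_cong)

lemma avg_diff: "avg S (\<lambda>l. F l - G l) = avg S F - avg S G"
  by (simp add: avg_def sum_subtractf scaleR_diff_right)

lemma tensor_app3_eq_inner_tensor_mat: "tensor_app3 T h w v = w \<bullet> (tensor_mat T h *v v)"
proof -
  have "tensor_app3 T h w v = (\<Sum>j\<in>UNIV. \<Sum>i\<in>UNIV. \<Sum>k\<in>UNIV. T$i$j$k * h$i * w$j * v$k)"
    unfolding tensor_app3_def by (rule sum.swap)
  also have "\<dots> = (\<Sum>j\<in>UNIV. \<Sum>k\<in>UNIV. \<Sum>i\<in>UNIV. T$i$j$k * h$i * w$j * v$k)"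
    by (intro sum.cong refl sum.swap)
  also have "\<dots> = w \<bullet> (tensor_mat T h *v v)"
    by (simp add: tensor_mat_def matrix_vector_mult_def inner_vec_def
        sum_distrib_left sum_distrib_right algebra_simps)
  finally show ?thesis .
qed

lemma inner_tensor_mat_eq_inner_tensor_vec: "u \<bullet> (tensor_mat T s *v u) = s \<bullet> tensor_vec T u"
  using tensor_app3_eq_inner_tensor_mat[of T s u u]
  by (simp add: tensor_app3_def tensor_vec_def inner_vec_def sum_distrib_left algebra_simps)

lemma abs_tensor_app3_le_sum_abs:
  assumes "norm h1 = 1" "norm h2 = 1" "norm h3 = 1"
  shows "\<bar>tensor_app3 T h1 h2 h3\<bar> \<le> (\<Sum>i\<in>UNIV. \<Sum>j\<in>UNIV. \<Sum>k\<in>UNIV. \<bar>T$i$j$k\<bar>)"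
proof -
  have "\<bar>h1$i\<bar> \<le> 1" "\<bar>h2$j\<bar> \<le> 1" "\<bar>h3$k\<bar> \<le> 1" for i j k
    using assms by (metis component_le_norm_cart)+
  then have "\<bar>h1$i\<bar> * \<bar>h2$j\<bar> * \<bar>h3$k\<bar> \<le> 1" for i j k
    by (intro mult_le_one) auto
  then have leaf: "\<bar>T$i$j$k * h1$i * h2$j * h3$k\<bar> \<le> \<bar>T$i$j$k\<bar>" for i j k
    by (simp add: abs_mult mult.assoc mult_left_le)
  show ?thesis
    unfolding tensor_app3_def
    by (rule order_trans[OF sum_abs] sum_mono leaf)+
qed

lemma abs_tensor_app3_le_tensor_norm:
  assumes "norm h1 = 1" "norm h2 = 1" "norm h3 = 1"
  shows "\<bar>tensor_app3 T h1 h2 h3\<bar> \<le> tensor_norm T"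
proof -
  have "bdd_above {\<bar>tensor_app3 T h1 h2 h3\<bar> | h1 h2 h3. norm h1 = 1 \<and> norm h2 = 1 \<and> norm h3 = 1}"
    by (rule bdd_aboveI[where M = "\<Sum>i\<in>UNIV. \<Sum>j\<in>UNIV. \<Sum>k\<in>UNIV. \<bar>T$i$j$k\<bar>"])
      (auto intro: abs_tensor_app3_le_sum_abs)
  then show ?thesis
    unfolding tensor_norm_def using assms by (intro cSup_upper) blast+
qed

lemma tensor_norm_nonneg: "0 \<le> tensor_norm (T::real^'d^'d^'d)"
  using abs_tensor_app3_le_tensor_norm[of "axis undefined 1" "axis undefined 1" "axis undefined 1" T]
  by simp

lemma tensor_app3_scaleR:
  "tensor_app3 T (a *\<^sub>R h1) (b *\<^sub>R h2) (c *\<^sub>R h3) = a * b * c * tensor_app3 T h1 h2 h3"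
  by (simp add: tensor_app3_def sum_distrib_left algebra_simps)

lemma abs_tensor_app3_le:
  "\<bar>tensor_app3 T h1 h2 h3\<bar> \<le> tensor_norm (T::real^'d^'d^'d) * norm h1 * norm h2 * norm h3"
proof (cases "h1 = 0 \<or> h2 = 0 \<or> h3 = 0")
  case True
  then show ?thesis using tensor_norm_nonneg[of T] by (auto simp: tensor_app3_def)
next
  case False
  have "tensor_app3 T h1 h2 h3 = norm h1 * norm h2 * norm h3 *
      tensor_app3 T (h1 /\<^sub>R norm h1) (h2 /\<^sub>R norm h2) (h3 /\<^sub>R norm h3)"
    using False by (simp add: tensor_app3_scaleR field_simps)
  also have "\<bar>\<dots>\<bar> \<le> norm h1 * norm h2 * norm h3 * tensor_norm T"
    using False by (simp add: abs_mult abs_tensor_app3_le_tensor_norm mult_left_mono)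
  finally show ?thesis by (simp add: mult_ac)
qed

lemma norm_tensor_mat_mult_le:
  "norm (tensor_mat T h *v v) \<le> tensor_norm (T::real^'d^'d^'d) * norm h * norm v"
proof -
  define y where "y = tensor_mat T h *v v"
  have "norm y * norm y = tensor_app3 T h y v"
    by (simp add: tensor_app3_eq_inner_tensor_mat y_def[symmetric] dot_square_norm power2_eq_square)
  also have "\<dots> \<le> norm y * (tensor_norm T * norm h * norm v)"
    using abs_tensor_app3_le[of T h y v] by (simp add: mult_ac)
  finally show ?thesis
    using tensor_norm_nonneg[of T] unfolding y_def[symmetric]
    by (cases "y = 0") (simp_all add: mult_le_cancel_left_pos)
qed

lemma spec_norm_nonneg: "0 \<le> spec_norm (M::real^'n^'n)"
  unfolding spec_norm_def by (rule onorm_pos_le) simp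

lemma sum_matrix_vector_mult: "sum F S *v v = (\<Sum>l\<in>S. F l *v (v::real^'n))"
  by (induction S rule: infinite_finite_induct) (simp_all add: matrix_vector_mult_add_rdistrib)

lemma norm_matrix_vector_le_spec_norm: "norm (M *v v) \<le> spec_norm (M::real^'n^'n) * norm v"
  unfolding spec_norm_def by (rule onorm) simp

lemma spec_norm_le:
  assumes "\<And>v. norm (M *v v) \<le> c * norm v"
  shows "spec_norm (M::real^'n^'n) \<le> c"
  unfolding spec_norm_def using assms by (rule onorm_le)

lemma spec_norm_add_le: "spec_norm (A + B) \<le> spec_norm A + spec_norm (B::real^'n^'n)"
  unfolding spec_norm_def matrix_vector_mult_add_rdistrib
  by (intro onorm_triangle) (simp_all add: linear_conv_bounded_linear[symmetric])

lemma norm_matrix_vector_le_if_symmetric: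
  fixes M :: "real^'n^'n"
  assumes sym: "transpose M = M" and quad: "\<And>u. \<bar>u \<bullet> (M *v u)\<bar> \<le> c * (norm u)\<^sup>2"
  shows "norm (M *v v) \<le> c * norm v"
proof (cases "v = 0 \<or> M *v v = 0")
  case True
  have "0 \<le> c" using quad[of "axis undefined 1"] by simp
  then show ?thesis using True by auto
next
  case False
  define y where "y = M *v v"
  have pos: "norm v > 0" "norm y > 0" using False y_def by auto
  \<comment> \<open>Polarization at \<open>w\<close>, the rescaling of \<open>M v\<close> to the length of \<open>v\<close>.\<close>
  define w where "w = (norm v / norm y) *\<^sub>R y"
  have "v \<bullet> (M *v w) = w \<bullet> (M *v v)"
    by (metis dot_lmul_matrix inner_commute sym vector_transpose_matrix)
  then have "4 * (w \<bullet> (M *v v)) = (w + v) \<bullet> (M *v (w + v)) - (w - v) \<bullet> (M *v (w - v))"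
    by (simp add: matrix_vector_right_distrib matrix_vector_mult_diff_distrib
        inner_add_left inner_add_right inner_diff_left inner_diff_right)
  also have "\<dots> \<le> c * (norm (w + v))\<^sup>2 + c * (norm (w - v))\<^sup>2"
    using quad[of "w + v"] quad[of "w - v"] by linarith
  also have "\<dots> = 2 * c * ((norm w)\<^sup>2 + (norm v)\<^sup>2)"
    by (simp add: power2_norm_eq_inner inner_commute algebra_simps)
  also have "\<dots> = 4 * (c * (norm v)\<^sup>2)"
    using pos by (simp add: w_def)
  finally have "norm v * norm y \<le> norm v * (c * norm v)"
    using pos by (simp add: w_def y_def[symmetric] dot_square_norm power2_eq_square)
  then show ?thesis using pos by (simp add: y_def)
qed

lemma spec_norm_tensor_mat_le:
  fixes D :: "real^'d^'d^'d"
  assumes sym: "\<And>i j k. D$i$j$k = D$i$k$j"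
    and bound: "\<And>u. norm (tensor_vec D u) \<le> c * (norm u)\<^sup>2"
  shows "spec_norm (tensor_mat D s) \<le> c * norm s"
proof (intro spec_norm_le norm_matrix_vector_le_if_symmetric)
  have "tensor_mat D s $ j $ k = tensor_mat D s $ k $ j" for j k
    by (simp add: tensor_mat_def sym[of _ j k])
  then show "transpose (tensor_mat D s) = tensor_mat D s"
    by (simp add: transpose_def vec_eq_iff)
  show "\<bar>u \<bullet> (tensor_mat D s *v u)\<bar> \<le> c * norm s * (norm u)\<^sup>2" for u
  proof -
    have "\<bar>u \<bullet> (tensor_mat D s *v u)\<bar> \<le> norm s * norm (tensor_vec D u)"
      unfolding inner_tensor_mat_eq_inner_tensor_vec by (rule Cauchy_Schwarz_ineq2)
    also have "\<dots> \<le> norm s * (c * (norm u)\<^sup>2)"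
      by (intro mult_left_mono bound) simp
    finally show ?thesis by (simp add: mult_ac)
  qed
qed

lemma spec_norm_avg_le:
  assumes "finite S" "S \<noteq> {}" "\<And>l. l \<in> S \<Longrightarrow> spec_norm (F l) \<le> c"
  shows "spec_norm (avg S F :: real^'n^'n) \<le> c"
proof (rule spec_norm_le)
  fix v :: "real^'n"
  have card: "real (card S) > 0" using assms by (simp add: card_gt_0_iff)
  have "norm (avg S F *v v) = norm (\<Sum>l\<in>S. F l *v v) / real (card S)"
    by (simp add: avg_def scaleR_matrix_vector_assoc[symmetric] sum_matrix_vector_mult)
  also have "\<dots> \<le> (\<Sum>l\<in>S. spec_norm (F l) * norm v) / real (card S)"
    by (intro divide_right_mono order_trans[OF norm_sum] sum_mono norm_matrix_vector_le_spec_norm) simp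
  also have "\<dots> \<le> (\<Sum>l\<in>S. c * norm v) / real (card S)"
    using assms by (intro divide_right_mono sum_mono mult_right_mono) simp_all
  also have "\<dots> = c * norm v" using card by simp
  finally show "norm (avg S F *v v) \<le> c * norm v" .
qed

lemma spec_norm_sampled_tensor_error_le:
  fixes T :: "nat \<Rightarrow> real^'d^'d^'d"
  assumes "S \<subseteq> I" and sym: "\<And>l a b c. l \<in> I \<Longrightarrow> T l $ a $ b $ c = T l $ a $ c $ b"
    and "\<And>u. norm (tensor_vec (avg S T) u - tensor_vec (avg I T) u) \<le> c * (norm u)\<^sup>2"
  shows "spec_norm (tensor_mat (avg I T - avg S T) s) \<le> c * norm s"
proof (rule spec_norm_tensor_mat_le)
  have "avg J T $ a $ b $ c = avg J T $ a $ c $ b" if "J \<subseteq> I" for J a b c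
    using that sym by (intro avg_partial_symmetric) auto
  then show "(avg I T - avg S T) $ a $ b $ c = (avg I T - avg S T) $ a $ c $ b" for a b c
    using \<open>S \<subseteq> I\<close> by simp
  show "norm (tensor_vec (avg I T - avg S T) u) \<le> c * (norm u)\<^sup>2" for u
    using assms(3)[of u] by (simp add: tensor_vec_diff norm_minus_commute)
qed

lemma bounded_linear_matrix_vector_mult_left: "bounded_linear (\<lambda>M::real^'n^'m. M *v v)"
  unfolding linear_conv_bounded_linear[symmetric]
  by (rule linearI) (simp_all add: matrix_vector_mult_add_rdistrib scaleR_matrix_vector_assoc)

lemma has_real_derivative_along_line:
  assumes df: "\<And>y. (f has_derivative (\<lambda>h. g y \<bullet> h)) (at y)"
  shows "((\<lambda>t. f (p + t *\<^sub>R h)) has_real_derivative g (p + t *\<^sub>R h) \<bullet> h) (at t)"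
proof -
  have "((\<lambda>t. p + t *\<^sub>R h) has_derivative (\<lambda>dt. dt *\<^sub>R h)) (at t)"
    by (auto intro!: derivative_eq_intros)
  from has_derivative_compose[OF this df] show ?thesis
    by (simp add: has_real_derivative_iff_has_vector_derivative has_vector_derivative_def)
qed

lemma norm_gradient_remainder_le:
  fixes g :: "real^'d \<Rightarrow> real^'d" and H :: "real^'d \<Rightarrow> real^'d^'d"
  assumes dg: "\<And>y. (g has_derivative (\<lambda>h. H y *v h)) (at y)"
    and lip: "\<And>y z. spec_norm (H y - H z) \<le> L * norm (y - z)" and L: "0 \<le> L"
  shows "norm (g b - g a - H x *v (b - a)) \<le> L * (norm (a - x) + norm (b - a)) * norm (b - a)"
proof -
  let ?R = "\<lambda>u. g u - H x *v u"
  have "(?R has_derivative (\<lambda>v. H u *v v - H x *v v)) (at u)" for u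
    by (rule has_derivative_diff[OF dg bounded_linear_imp_has_derivative]) simp
  then have der: "(?R has_derivative (\<lambda>v. (H u - H x) *v v)) (at u within closed_segment a b)"
    for u by (simp add: has_derivative_at_withinI matrix_vector_mult_diff_rdistrib)
  have bound: "onorm (\<lambda>v. (H u - H x) *v v) \<le> L * (norm (a - x) + norm (b - a))"
    if "u \<in> closed_segment a b" for u
  proof -
    have "norm (u - x) \<le> norm (u - a) + norm (a - x)"
      using norm_triangle_ineq[of "u - a" "a - x"] by simp
    also have "\<dots> \<le> norm (a - x) + norm (b - a)"
      using segment_bound1[OF that] by simp
    finally have "L * norm (u - x) \<le> L * (norm (a - x) + norm (b - a))"
      using L by (rule mult_left_mono)
    with lip[of u x] show ?thesis by (simp add: spec_norm_def)
  qed
  have "norm (?R b - ?R a) \<le> L * (norm (a - x) + norm (b - a)) * norm (b - a)"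
    using differentiable_bound[OF convex_closed_segment der bound] by simp
  then show ?thesis by (simp add: algebra_simps)
qed

lemma second_difference_approx:
  fixes f :: "real^'d \<Rightarrow> real" and g :: "real^'d \<Rightarrow> real^'d" and H :: "real^'d \<Rightarrow> real^'d^'d"
  assumes df: "\<And>y. (f has_derivative (\<lambda>h. g y \<bullet> h)) (at y)"
    and dg: "\<And>y. (g has_derivative (\<lambda>h. H y *v h)) (at y)"
    and lip: "\<And>y z. spec_norm (H y - H z) \<le> L * norm (y - z)" and L: "0 \<le> L"
    and t: "0 < t"
  shows "\<bar>f (x + t *\<^sub>R k + t *\<^sub>R h) - f (x + t *\<^sub>R h) - f (x + t *\<^sub>R k) + f x
            - t\<^sup>2 * (h \<bullet> (H x *v k))\<bar> \<le> L * (norm h + norm k) * norm k * norm h * t ^ 3"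
proof -
  define p where "p = x + t *\<^sub>R k"
  define F where "F s = f (p + s *\<^sub>R h) - f (x + s *\<^sub>R h) - t * (h \<bullet> (H x *v k)) * s" for s
  define F' where "F' s = h \<bullet> (g (x + s *\<^sub>R h + t *\<^sub>R k) - g (x + s *\<^sub>R h) - H x *v (t *\<^sub>R k))"
    for s
  have "(F has_real_derivative F' s) (at s)" for s
  proof -
    have "(F has_real_derivative g (p + s *\<^sub>R h) \<bullet> h - g (x + s *\<^sub>R h) \<bullet> h - t * (h \<bullet> (H x *v k)))
        (at s)"
      unfolding F_def
      by (rule DERIV_diff DERIV_cmult_Id has_real_derivative_along_line[OF df])+
    then show ?thesis
      by (simp add: F'_def p_def inner_diff_right inner_commute add_ac matrix_vector_mult_scaleR)
  qed
  then obtain z where z: "0 < z" "z < t" and mvt: "F t - F 0 = t * F' z"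
    using MVT2[OF t, of F F'] by auto
  have "\<bar>F' z\<bar> \<le> norm h * norm (g (x + z *\<^sub>R h + t *\<^sub>R k) - g (x + z *\<^sub>R h) - H x *v (t *\<^sub>R k))"
    unfolding F'_def by (rule Cauchy_Schwarz_ineq2)
  also have "\<dots> \<le> norm h * (L * (norm (z *\<^sub>R h) + norm (t *\<^sub>R k)) * norm (t *\<^sub>R k))"
    using norm_gradient_remainder_le[OF dg lip L, of "x + z *\<^sub>R h + t *\<^sub>R k" "x + z *\<^sub>R h" x]
    by (intro mult_left_mono) simp_all
  also have "\<dots> = norm h * (L * (z * norm h + t * norm k) * (t * norm k))"
    using z t by simp
  also have "\<dots> \<le> norm h * (L * (t * norm h + t * norm k) * (t * norm k))"
    using z t L by (intro mult_left_mono mult_right_mono add_right_mono) simp_all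
  finally have "\<bar>F t - F 0\<bar> \<le> t * (norm h * (L * (t * norm h + t * norm k) * (t * norm k)))"
    using t by (simp add: mvt abs_mult mult_left_mono)
  then show ?thesis
    by (simp add: F_def p_def power2_eq_square power3_eq_cube algebra_simps)
qed

lemma hessian_symmetric:
  fixes f :: "real^'d \<Rightarrow> real" and g :: "real^'d \<Rightarrow> real^'d" and H :: "real^'d \<Rightarrow> real^'d^'d"
  assumes df: "\<And>y. (f has_derivative (\<lambda>h. g y \<bullet> h)) (at y)"
    and dg: "\<And>y. (g has_derivative (\<lambda>h. H y *v h)) (at y)"
    and lip: "\<And>y z. spec_norm (H y - H z) \<le> L * norm (y - z)"
  shows "transpose (H x) = H x"
proof -
  have L: "0 \<le> L"
    using spec_norm_nonneg[of "H (x + axis undefined 1) - H x"] lip[of "x + axis undefined 1" x]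
    by simp
  have swap: "h \<bullet> (H x *v k) = k \<bullet> (H x *v h)" for h k
  proof -
    \<comment> \<open>The second difference is symmetric in \<open>h, k\<close>, so both \<open>t\<^sup>2\<close>-coefficients
      agree up to \<open>O(t\<^sup>3)\<close>.\<close>
    define C where "C = 2 * L * (norm h + norm k) * norm h * norm k"
    have small: "\<bar>h \<bullet> (H x *v k) - k \<bullet> (H x *v h)\<bar> \<le> C * t" if t: "0 < t" for t
    proof -
      define D where "D = f (x + t *\<^sub>R k + t *\<^sub>R h) - f (x + t *\<^sub>R h) - f (x + t *\<^sub>R k) + f x"
      define B where "B = L * (norm h + norm k) * norm k * norm h * t ^ 3"
      have "\<bar>D - t\<^sup>2 * (h \<bullet> (H x *v k))\<bar> \<le> B"
        using second_difference_approx[OF df dg lip L t, of x k h] by (simp add: D_def B_def)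
      moreover have "\<bar>D - t\<^sup>2 * (k \<bullet> (H x *v h))\<bar> \<le> B"
        using second_difference_approx[OF df dg lip L t, of x h k]
        by (simp add: D_def B_def add_ac mult_ac)
      ultimately have "\<bar>t\<^sup>2 * (h \<bullet> (H x *v k)) - t\<^sup>2 * (k \<bullet> (H x *v h))\<bar> \<le> 2 * B"
        by (simp add: abs_le_iff)
      then have "t\<^sup>2 * \<bar>h \<bullet> (H x *v k) - k \<bullet> (H x *v h)\<bar> \<le> t\<^sup>2 * (C * t)"
        by (simp add: abs_mult right_diff_distrib[symmetric] B_def C_def power3_eq_cube
            power2_eq_square mult_ac)
      then show ?thesis using t by simp
    qed
    have "0 \<le> C" using L by (simp add: C_def)
    have "\<bar>h \<bullet> (H x *v k) - k \<bullet> (H x *v h)\<bar> \<le> 0 + e" if "0 < e" for e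
    proof -
      have "C * (e / (C + 1)) \<le> e"
        using \<open>0 \<le> C\<close> that by (simp add: field_simps)
      with small[of "e / (C + 1)"] show ?thesis
        using \<open>0 \<le> C\<close> that by simp
    qed
    then show ?thesis using field_le_epsilon[of _ 0] by force
  qed
  show ?thesis
    using swap[of "axis _ 1" "axis _ 1"]
    by (simp add: vec_eq_iff transpose_def inner_axis' matrix_vector_mult_basis column_def)
qed

lemma tensor_derivative_symmetric:
  assumes dH: "(Hf has_derivative (\<lambda>h. tensor_mat T h)) (at x)"
    and sym: "\<And>y. transpose (Hf y) = Hf y"
  shows "T $ i $ j $ k = T $ i $ k $ j"
proof -
  have entry: "((\<lambda>y. Hf y $ a $ b) has_derivative (\<lambda>h. tensor_mat T h $ a $ b)) (at x)" for a b
    by (intro bounded_linear.has_derivative[OF bounded_linear_vec_nth] dH)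
  have "Hf y $ j $ k = Hf y $ k $ j" for y
    using arg_cong[OF sym[of y], of "\<lambda>M. M $ k $ j"] by (simp add: transpose_def)
  with entry[of k j] have "((\<lambda>y. Hf y $ j $ k) has_derivative (\<lambda>h. tensor_mat T h $ k $ j)) (at x)"
    by simp
  from has_derivative_unique[OF entry[of j k] this]
  show ?thesis by (metis tensor_mat_axis)
qed

lemma spec_norm_hessian_remainder_le:
  fixes Hf :: "real^'d \<Rightarrow> real^'d^'d" and T :: "real^'d \<Rightarrow> real^'d^'d^'d"
  assumes dH: "\<And>y. (Hf has_derivative (\<lambda>h. tensor_mat (T y) h)) (at y)"
    and lipT: "\<And>y z. tensor_norm (T y - T z) \<le> Lt * norm (y - z)"
  shows "spec_norm (Hf (x + s) - Hf x - tensor_mat (T x) s) \<le> Lt / 2 * (norm s)\<^sup>2"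
proof (rule spec_norm_le)
  fix v :: "real^'d"
  define K where "K = Lt * (norm s)\<^sup>2 * norm v"
  define F where "F t = Hf (x + t *\<^sub>R s) *v v - t *\<^sub>R (tensor_mat (T x) s *v v)" for t
  have "((\<lambda>t. x + t *\<^sub>R s) has_derivative (\<lambda>dt. dt *\<^sub>R s)) (at t)" for t
    by (auto intro!: derivative_eq_intros)
  from has_derivative_compose[OF this dH]
  have "((\<lambda>t. Hf (x + t *\<^sub>R s)) has_derivative (\<lambda>dt. dt *\<^sub>R tensor_mat (T (x + t *\<^sub>R s)) s)) (at t)"
    for t by (simp add: tensor_mat_scaleR_right)
  from bounded_linear.has_derivative[OF bounded_linear_matrix_vector_mult_left this]
  have "((\<lambda>t. Hf (x + t *\<^sub>R s) *v v) has_derivative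
      (\<lambda>dt. dt *\<^sub>R (tensor_mat (T (x + t *\<^sub>R s)) s *v v))) (at t)" for t
    by (simp add: scaleR_matrix_vector_assoc)
  then have der: "(F has_vector_derivative (tensor_mat (T (x + t *\<^sub>R s) - T x) s *v v)) (at t)" for t
    unfolding F_def has_vector_derivative_def
    by (auto intro!: derivative_eq_intros
        simp: tensor_mat_diff matrix_vector_mult_diff_rdistrib scaleR_diff_right)
  have bound: "norm (tensor_mat (T (x + t *\<^sub>R s) - T x) s *v v) \<le> K * t" if "0 < t" for t
  proof -
    have "norm (tensor_mat (T (x + t *\<^sub>R s) - T x) s *v v)
        \<le> tensor_norm (T (x + t *\<^sub>R s) - T x) * norm s * norm v"
      by (rule norm_tensor_mat_mult_le)
    also have "\<dots> \<le> Lt * (t * norm s) * norm s * norm v"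
      using lipT[of "x + t *\<^sub>R s" x] that by (intro mult_right_mono) simp_all
    finally show ?thesis by (simp add: K_def power2_eq_square mult_ac)
  qed
  have "norm (F 1 - F 0) \<le> K / 2 * 1\<^sup>2 - K / 2 * 0\<^sup>2"
  proof (rule differentiable_bound_general[OF zero_less_one])
    show "continuous_on {0..1} F"
      using der by (meson continuous_at_imp_continuous_on has_vector_derivative_continuous)
    show "((\<lambda>t. K / 2 * t\<^sup>2) has_vector_derivative K * t) (at t)" for t
      by (auto intro!: derivative_eq_intros simp: has_real_derivative_iff_has_vector_derivative[symmetric])
    show "continuous_on {0..1} (\<lambda>t. K / 2 * t\<^sup>2)"
      by (intro continuous_intros)
  qed (use der bound in auto)
  moreover have "F 1 - F 0 = (Hf (x + s) - Hf x - tensor_mat (T x) s) *v v"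
    by (simp add: F_def matrix_vector_mult_diff_rdistrib)
  ultimately show "norm ((Hf (x + s) - Hf x - tensor_mat (T x) s) *v v) \<le> Lt / 2 * (norm s)\<^sup>2 * norm v"
    by (simp add: K_def)
qed

theorem lemma8:
  fixes n :: nat
    and fi :: "nat \<Rightarrow> real^'d \<Rightarrow> real"
    and gi :: "nat \<Rightarrow> real^'d \<Rightarrow> real^'d"
    and Hi :: "nat \<Rightarrow> real^'d \<Rightarrow> real^'d^'d"
    and Ti :: "nat \<Rightarrow> real^'d \<Rightarrow> real^'d^'d^'d"
    and L_f L_g L_b L_t :: real
    and Sg Sb St :: "nat set"
    and xk :: "real^'d"
    and \<epsilon> \<kappa>_g \<kappa>_b \<kappa>_t :: real
  assumes n_pos: "n > 0"
    and d_f: "\<And>i x. i < n \<Longrightarrow> (fi i has_derivative (\<lambda>h. gi i x \<bullet> h)) (at x)"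
    and d_g: "\<And>i x. i < n \<Longrightarrow> (gi i has_derivative (\<lambda>h. Hi i x *v h)) (at x)"
    and d_H: "\<And>i x. i < n \<Longrightarrow> (Hi i has_derivative (\<lambda>h. tensor_mat (Ti i x) h)) (at x)"
    and lip_f: "\<And>i x y. i < n \<Longrightarrow> \<bar>fi i x - fi i y\<bar> \<le> L_f * norm (x - y)"
    and lip_g: "\<And>i x y. i < n \<Longrightarrow> norm (gi i x - gi i y) \<le> L_g * norm (x - y)"
    and lip_H: "\<And>i x y. i < n \<Longrightarrow> spec_norm (Hi i x - Hi i y) \<le> L_b * norm (x - y)"
    and lip_T: "\<And>i x y. i < n \<Longrightarrow> tensor_norm (Ti i x - Ti i y) \<le> L_t * norm (x - y)"
    and Sg: "Sg \<subseteq> {..<n}" "Sg \<noteq> {}"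
    and Sb: "Sb \<subseteq> {..<n}" "Sb \<noteq> {}"
    and St: "St \<subseteq> {..<n}" "St \<noteq> {}"
    and eps_pos: "\<epsilon> > 0"
    and kappa_pos: "\<kappa>_g > 0" "\<kappa>_b > 0" "\<kappa>_t > 0"
    and samp_g: "norm (avg Sg (\<lambda>i. gi i xk) - avg {..<n} (\<lambda>i. gi i xk)) \<le> \<kappa>_g * \<epsilon>"
    and samp_b: "\<And>s. norm ((avg Sb (\<lambda>i. Hi i xk) - avg {..<n} (\<lambda>i. Hi i xk)) *v s)
                    \<le> \<kappa>_b * \<epsilon> powr (2/3) * norm s"
    and samp_t: "\<And>s. norm (tensor_vec (avg St (\<lambda>i. Ti i xk)) s
                         - tensor_vec (avg {..<n} (\<lambda>i. Ti i xk)) s)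
                    \<le> \<kappa>_t * \<epsilon> powr (1/3) * (norm s)\<^sup>2"
  shows "\<forall>s. spec_norm (avg {..<n} (\<lambda>i. Hi i (xk + s))
                   - (avg Sb (\<lambda>i. Hi i xk) + tensor_mat (avg St (\<lambda>i. Ti i xk)) s))
            \<le> (L_t / 2 + \<kappa>_t / 2) * (norm s)\<^sup>2 + (\<kappa>_b + \<kappa>_t / 2) * \<epsilon> powr (2/3)"
proof
  fix s :: "real^'d"
  define e where "e = \<epsilon> powr (1/3)"
  have e_sq: "\<epsilon> powr (2/3) = e\<^sup>2"
    unfolding e_def by (simp add: power2_eq_square powr_add[symmetric])
  define Bf Bk Tf Tk where "Bf = avg {..<n} (\<lambda>i. Hi i xk)" and "Bk = avg Sb (\<lambda>i. Hi i xk)"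
    and "Tf = avg {..<n} (\<lambda>i. Ti i xk)" and "Tk = avg St (\<lambda>i. Ti i xk)"
  define R where "R = avg {..<n} (\<lambda>i. Hi i (xk + s) - Hi i xk - tensor_mat (Ti i xk) s)"
  have decomposition: "avg {..<n} (\<lambda>i. Hi i (xk + s)) - (Bk + tensor_mat Tk s)
      = R + (Bf - Bk) + tensor_mat (Tf - Tk) s"
    by (simp add: R_def Bf_def Tf_def avg_diff tensor_mat_avg tensor_mat_diff)
  have sym: "Ti i xk $ a $ b $ c = Ti i xk $ a $ c $ b" if "i < n" for i a b c
    by (rule tensor_derivative_symmetric[OF d_H[OF that]
          hessian_symmetric[OF d_f[OF that] d_g[OF that] lip_H[OF that]]])
  have "spec_norm R \<le> L_t / 2 * (norm s)\<^sup>2"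
    unfolding R_def using n_pos
    by (intro spec_norm_avg_le spec_norm_hessian_remainder_le d_H lip_T) auto
  moreover have "spec_norm (Bf - Bk) \<le> \<kappa>_b * e\<^sup>2"
    using samp_b by (intro spec_norm_le)
      (simp add: Bf_def Bk_def e_sq matrix_vector_mult_diff_rdistrib norm_minus_commute)
  moreover have "spec_norm (tensor_mat (Tf - Tk) s) \<le> \<kappa>_t * e * norm s"
    unfolding Tf_def Tk_def e_def
    by (rule spec_norm_sampled_tensor_error_le[OF St(1) sym samp_t]) simp
  ultimately have "spec_norm (avg {..<n} (\<lambda>i. Hi i (xk + s)) - (Bk + tensor_mat Tk s))
      \<le> L_t / 2 * (norm s)\<^sup>2 + \<kappa>_b * e\<^sup>2 + \<kappa>_t * e * norm s"
    unfolding decomposition by (meson add_mono order_trans spec_norm_add_le)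
  also have "\<dots> \<le> (L_t / 2 + \<kappa>_t / 2) * (norm s)\<^sup>2 + (\<kappa>_b + \<kappa>_t / 2) * e\<^sup>2"
    using mult_left_mono[OF sum_squares_bound[of e "norm s"], of \<kappa>_t] kappa_pos(3)
    by (simp add: algebra_simps)
  finally show "spec_norm (avg {..<n} (\<lambda>i. Hi i (xk + s)) - (Bk + tensor_mat Tk s))
      \<le> (L_t / 2 + \<kappa>_t / 2) * (norm s)\<^sup>2 + (\<kappa>_b + \<kappa>_t / 2) * \<epsilon> powr (2/3)"
    unfolding e_sq .
qed

end
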